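(* Let $d_R\ge2$, let the glue code $H_G$ be compatible with the memory via $S,T$, and let $J_G$ be any matrix with $\mathrm{rs}J_G\subseteq\ker H_G$ and $J_{Z,A}=J_GS$ (such $J_G$ exists when the glue code is coarsely devised for $\Sigma$). Let $P=P_{M\text{-}B}$ be the matrix such that $xP$ places $x\in\mathbb F_2^n$ on block $u_0$ and zeros elsewhere, and $P_{ob}$ the matrix such that $yP_{ob}$ places $y\in\mathbb F_2^{n_G}$ on the open-boundary block $u_{d_R-1}$ and zeros elsewhere. Then $\mathrm{rs}H_X=\mathrm{rs}(H^{M\text{-}B}_XP^{\mathrm T})$, $\mathrm{rs}(H_ZP)\subseteq\mathrm{rs}H^{M\text{-}B}_Z$, $\mathrm{rs}J_X=\mathrm{rs}(J^{M\text{-}B}_XP^{\mathrm T})$, $\mathrm{rs}(J_ZP)=\mathrm{rs}J^{M\text{-}B}_Z$, and $\mathrm{rs}(J_{Z,A}P+J_GP_{ob})\subseteq\mathrm{rs}H^{M\text{-}B}_Z$.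
   Context: All vectors are row vectors over $\mathbb F_2$; $\mathrm{rs}A$ is the row space, $\ker A=\{x:Ax^{\mathrm T}=0\}$, $VM=\{vM:v\in V\}$, $E_m$ the identity. The memory is a CSS subsystem code specified by $H_X\in\mathbb F_2^{r_X\times n}$, $H_Z\in\mathbb F_2^{r_Z\times n}$, $J_X,J_Z\in\mathbb F_2^{k\times n}$, $F_X,F_Z\in\mathbb F_2^{k_g\times n}$ satisfying $\ker H_X=\mathrm{rs}H_Z\oplus\mathrm{rs}J_Z\oplus\mathrm{rs}F_Z$, $\ker H_Z=\mathrm{rs}H_X\oplus\mathrm{rs}J_X\oplus\mathrm{rs}F_X$, $J_XJ_Z^{\mathrm T}=E_k$, $F_XF_Z^{\mathrm T}=E_{k_g}$. Let $v_1,\dots,v_q\in\mathrm{rs}J_Z$ be linearly independent (representing $\Sigma$), $J_{Z,A}$ the matrix with rows $v_1,\dots,v_q$; extend to a basis $v_1,\dots,v_k$ of $\mathrm{rs}J_Z$ and let $J_{Z,C}$ have rows $v_{q+1},\dots,v_k$. Let $\bar J_Z$ be the invertible $k\times k$ matrix with $\binom{J_{Z,A}}{J_{Z,C}}=\bar J_ZJ_Z$ and define $J_{X,A},J_{X,C}$ by $\binom{J_{X,A}}{J_{X,C}}=(\bar J_Z^{-1})^{\mathrm T}J_X$. A glue code $H_G\in\mathbb F_2^{r_G\times n_G}$ is compatible via pasting matrices $S\in\mathbb F_2^{n_G\times n}$, $T\in\mathbb F_2^{r_X\times r_G}$ if $H_XS^{\mathrm T}=TH_G$; it is coarsely devised for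 $\Sigma$ if $\mathrm{span}(v_1,\dots,v_q)\subseteq(\ker H_G)S$. Branch-sticker deformed code: coordinates split into blocks $u_0\in\mathbb F_2^n$, $u_1,\dots,u_{d_R-1}\in\mathbb F_2^{n_G}$, $w_1,\dots,w_{d_R-1}\in\mathbb F_2^{r_G}$. $H^{M\text{-}B}_X$ has row-block $0$ equal to $H_X$ on $u_0$ and $T$ on $w_1$, and for $1\le j\le d_R-1$ row-block $j$ equal to $H_G$ on $u_j$, $E_{r_G}$ on $w_j$ and $E_{r_G}$ on $w_{j+1}$ (the latter only if $j\le d_R-2$). $H^{M\text{-}B}_Z$ has row-block $0$ equal to $H_Z$ on $u_0$, and for $1\le i\le d_R-1$ row-block $i$ equal to $S$ on $u_0$ (only if $i=1$), $E_{n_G}$ on $u_{i-1}$ (only if $i\ge2$), $E_{n_G}$ on $u_i$, and $H_G^{\mathrm T}$ on $w_i$. With $J'_X=\binom{J_{X,A}}{J_{X,C}}$, $J'_Z=\binom{J_{Z,A}}{J_{Z,C}}$: $J^{M\text{-}B}_X$ equals $J'_X$ on $u_0$, $J'_XS^{\mathrm T}$ on each $u_j$ and $0$ on all $w_j$; $J^{M\text{-}B}_Z$ equals $J'_Z$ on $u_0$ and $0$ elsewhere. The block $u_{d_R-1}$ is the open boundary. *)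

theory Defs
  imports "Jordan_Normal_Form.Matrix_Kernel" "HOL-Library.Z2"
begin

text \<open>Matrices over F2 are Jordan_Normal_Form matrices with entries of type bit.
  Vectors are row vectors; a matrix A with nr rows and nc columns acts on
  row vectors by v |-> v A.\<close>

definition rs :: "bit mat \<Rightarrow> bit vec set" where
  "rs A = {A\<^sup>T *\<^sub>v c | c. c \<in> carrier_vec (dim_row A)}"

abbreviation ker :: "bit mat \<Rightarrow> bit vec set" where
  "ker A \<equiv> mat_kernel A"

definition direct_sum3 :: "bit vec set \<Rightarrow> bit vec set \<Rightarrow> bit vec set \<Rightarrow> bit vec set \<Rightarrow> bool" where
  "direct_sum3 V U1 U2 U3 \<longleftrightarrow>
     V = {a + b + c | a b c. a \<in> U1 \<and> b \<in> U2 \<and> c \<in> U3} \<and>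
     (\<forall>a b c. a \<in> U1 \<longrightarrow> b \<in> U2 \<longrightarrow> c \<in> U3 \<longrightarrow> a + b + c = 0\<^sub>v (dim_vec a)
        \<longrightarrow> a = 0\<^sub>v (dim_vec a) \<and> b = 0\<^sub>v (dim_vec b) \<and> c = 0\<^sub>v (dim_vec c))"

text \<open>The memory: CSS subsystem code data with k logical and kg gauge qubits.\<close>
definition css_subsystem_code ::
  "nat \<Rightarrow> nat \<Rightarrow> nat \<Rightarrow> nat \<Rightarrow> nat \<Rightarrow> bit mat \<Rightarrow> bit mat \<Rightarrow> bit mat \<Rightarrow> bit mat \<Rightarrow> bit mat \<Rightarrow> bit mat \<Rightarrow> bool" where
  "css_subsystem_code n rX rZ k kg HX HZ JX JZ FX FZ \<longleftrightarrow>
     HX \<in> carrier_mat rX n \<and> HZ \<in> carrier_mat rZ n \<and>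
     JX \<in> carrier_mat k n \<and> JZ \<in> carrier_mat k n \<and>
     FX \<in> carrier_mat kg n \<and> FZ \<in> carrier_mat kg n \<and>
     direct_sum3 (ker HX) (rs HZ) (rs JZ) (rs FZ) \<and>
     direct_sum3 (ker HZ) (rs HX) (rs JX) (rs FX) \<and>
     JX * JZ\<^sup>T = 1\<^sub>m k \<and> FX * FZ\<^sup>T = 1\<^sub>m kg"

text \<open>Coordinate layout of the branch-sticker deformed code with D = d_R:
  columns are ordered u_0 (n), u_1,...,u_{D-1} (nG each), w_1,...,w_{D-1} (rG each).
  Total length n + (D-1) nG + (D-1) rG.\<close>
definition mb_len :: "nat \<Rightarrow> nat \<Rightarrow> nat \<Rightarrow> nat \<Rightarrow> nat" where
  "mb_len n nG rG D = n + (D - 1) * nG + (D - 1) * rG"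

definition HX_MB :: "nat \<Rightarrow> nat \<Rightarrow> nat \<Rightarrow> nat \<Rightarrow> bit mat \<Rightarrow> bit mat \<Rightarrow> bit mat \<Rightarrow> bit mat" where
  "HX_MB n nG rG D HX HG T =
    (let rX = dim_row HX; wb = n + (D - 1) * nG in
     mat (rX + (D - 1) * rG) (mb_len n nG rG D) (\<lambda>(i, c).
       if i < rX then
         (if c < n then HX $$ (i, c)
          else if wb \<le> c \<and> c < wb + rG then T $$ (i, c - wb)
          else 0)
       else
         (let j = (i - rX) div rG + 1; a = (i - rX) mod rG in
          if c < n then 0
          else if c < wb then
            (let jj = (c - n) div nG + 1; b = (c - n) mod nG in
             if jj = j then HG $$ (a, b) else 0)
          else
            (let jj = (c - wb) div rG + 1; b = (c - wb) mod rG in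
             if (jj = j \<or> jj = j + 1) \<and> b = a then 1 else 0))))"

definition HZ_MB :: "nat \<Rightarrow> nat \<Rightarrow> nat \<Rightarrow> nat \<Rightarrow> bit mat \<Rightarrow> bit mat \<Rightarrow> bit mat \<Rightarrow> bit mat" where
  "HZ_MB n nG rG D HZ HG S =
    (let rZ = dim_row HZ; wb = n + (D - 1) * nG in
     mat (rZ + (D - 1) * nG) (mb_len n nG rG D) (\<lambda>(r, c).
       if r < rZ then
         (if c < n then HZ $$ (r, c) else 0)
       else
         (let i = (r - rZ) div nG + 1; a = (r - rZ) mod nG in
          if c < n then (if i = 1 then S $$ (a, c) else 0)
          else if c < wb then
            (let jj = (c - n) div nG + 1; b = (c - n) mod nG in
             if (jj = i \<or> jj + 1 = i) \<and> b = a then 1 else 0)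
          else
            (let jj = (c - wb) div rG + 1; b = (c - wb) mod rG in
             if jj = i then HG $$ (b, a) else 0))))"

definition JX_MB :: "nat \<Rightarrow> nat \<Rightarrow> nat \<Rightarrow> nat \<Rightarrow> bit mat \<Rightarrow> bit mat \<Rightarrow> bit mat" where
  "JX_MB n nG rG D JXp S =
    (let wb = n + (D - 1) * nG; JS = JXp * S\<^sup>T in
     mat (dim_row JXp) (mb_len n nG rG D) (\<lambda>(i, c).
       if c < n then JXp $$ (i, c)
       else if c < wb then JS $$ (i, (c - n) mod nG)
       else 0))"

definition JZ_MB :: "nat \<Rightarrow> nat \<Rightarrow> nat \<Rightarrow> nat \<Rightarrow> bit mat \<Rightarrow> bit mat" where
  "JZ_MB n nG rG D JZp =
     mat (dim_row JZp) (mb_len n nG rG D) (\<lambda>(i, c). if c < n then JZp $$ (i, c) else 0)"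

definition P_MB :: "nat \<Rightarrow> nat \<Rightarrow> nat \<Rightarrow> nat \<Rightarrow> bit mat" where
  "P_MB n nG rG D = mat n (mb_len n nG rG D) (\<lambda>(i, c). if c = i then 1 else 0)"

definition P_ob :: "nat \<Rightarrow> nat \<Rightarrow> nat \<Rightarrow> nat \<Rightarrow> bit mat" where
  "P_ob n nG rG D = mat nG (mb_len n nG rG D) (\<lambda>(i, c). if c = n + (D - 2) * nG + i then 1 else 0)"

end

theory Submission
  imports Defs
begin

text \<open>The first four identities are bookkeeping: restricted to the columns of u_0,
  H_X^{M-B} is H_X padded with zero rows and J_X^{M-B} is J'_X, while J'_X and J'_Z arise
  from J_X and J_Z by invertible row operations. For the last one, add up the copies of the
  rows of J_G in all d_R - 1 glue layers of H_Z^{M-B}. On u_0 only the first layer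
  contributes, giving J_G S = J_{Z,A}. On each u_j the identity blocks of layers j and j+1
  cancel over F_2, except on the open boundary u_{d_R-1}, which only the last layer meets.
  On each w_j one gets J_G H_G^T = 0, since rs J_G \<subseteq> ker H_G.\<close>

(* Otherwise simp turns + and * on bit into XOR and AND, which defeats sum.delta and friends. *)
declare add_bit_eq_xor [simp del] mult_bit_eq_and [simp del]

lemma bit_add_self [simp]: "(x :: bit) + x = 0"
  by (cases x) auto

lemma sum_lessThan_add:
  fixes f :: "nat \<Rightarrow> 'a :: comm_monoid_add"
  shows "(\<Sum>t<a + b. f t) = (\<Sum>t<a. f t) + (\<Sum>t<b. f (a + t))"
  by (induction b) (simp_all add: add_ac)

lemma sum_lessThan_mult:
  fixes f :: "nat \<Rightarrow> 'a :: comm_monoid_add"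
  shows "(\<Sum>t<m * p. f t) = (\<Sum>j<m. \<Sum>a<p. f (j * p + a))"
proof (induction m)
  case (Suc m)
  have "(\<Sum>t<Suc m * p. f t) = (\<Sum>t<m * p + p. f t)" by (simp add: add.commute)
  also have "\<dots> = (\<Sum>t<m * p. f t) + (\<Sum>a<p. f (m * p + a))" by (rule sum_lessThan_add)
  finally show ?case using Suc by simp
qed simp

lemma sum_adjacent_layers:
  fixes x :: bit and k N :: nat
  assumes "k < N"
  shows "(\<Sum>j<N. if k = j \<or> k + 1 = j then x else 0) = (if k + 1 < N then 0 else x)"
proof -
  have "(\<Sum>j<N. if k = j \<or> k + 1 = j then x else 0) =
      (\<Sum>j<N. (if j = k then x else 0) + (if j = k + 1 then x else 0))"
    by (intro sum.cong) auto
  also have "\<dots> = x + (if k + 1 < N then x else 0)"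
    using assms by (simp add: sum.distrib)
  also have "\<dots> = (if k + 1 < N then 0 else x)" by simp
  finally show ?thesis .
qed

lemma index_mult_mat_sum:
  assumes "A \<in> carrier_mat m l" "B \<in> carrier_mat l p" "i < m" "j < p"
  shows "(A * B) $$ (i, j) = (\<Sum>t<l. A $$ (i, t) * B $$ (t, j))"
  using assms by (simp add: scalar_prod_def atLeast0LessThan)

lemma rs_mult_subset:
  assumes M: "M \<in> carrier_mat m r" and B: "B \<in> carrier_mat r c"
  shows "rs (M * B) \<subseteq> rs B"
proof
  fix x assume "x \<in> rs (M * B)"
  then obtain v where x: "x = (M * B)\<^sup>T *\<^sub>v v" and v: "v \<in> carrier_vec m"
    unfolding rs_def using M B by auto
  have "x = B\<^sup>T *\<^sub>v (M\<^sup>T *\<^sub>v v)"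
    unfolding x using M B v by (simp add: transpose_mult assoc_mult_mat_vec[of _ c r _ m])
  then show "x \<in> rs B" unfolding rs_def using M B v by auto
qed

lemma rs_mult_left_invertible:
  assumes M: "M \<in> carrier_mat k k" and N: "N \<in> carrier_mat k k" and NM: "N * M = 1\<^sub>m k"
    and B: "B \<in> carrier_mat k c"
  shows "rs (M * B) = rs B"
proof
  show "rs (M * B) \<subseteq> rs B" using M B by (rule rs_mult_subset)
  have "N * (M * B) = B" using M N B by (simp add: assoc_mult_mat[symmetric, of N k k M k B c] NM)
  then show "rs B \<subseteq> rs (M * B)" using rs_mult_subset[OF N, of "M * B" c] M B by simp
qed

lemma mult_transpose_zero_if_rs_subset_ker:
  assumes A: "A \<in> carrier_mat q m" and B: "B \<in> carrier_mat r m" and ker: "rs A \<subseteq> ker B"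
  shows "A * B\<^sup>T = 0\<^sub>m q r"
proof (rule eq_matI)
  fix i b assume "i < dim_row (0\<^sub>m q r :: bit mat)" "b < dim_col (0\<^sub>m q r :: bit mat)"
  then have ib: "i < q" "b < r" by auto
  have "A\<^sup>T *\<^sub>v unit_vec q i = row A i" using A ib by (intro eq_vecI) auto
  moreover have "A\<^sup>T *\<^sub>v unit_vec q i \<in> rs A" unfolding rs_def using A by auto
  ultimately have kernel: "B *\<^sub>v row A i = 0\<^sub>v r" using ker B by (auto simp: mat_kernel_def)
  have "row B b \<bullet> row A i = (B *\<^sub>v row A i) $ b" using ib B by simp
  also have "\<dots> = 0" unfolding kernel using ib by simp
  finally have "row B b \<bullet> row A i = 0" .
  then show "(A * B\<^sup>T) $$ (i, b) = 0\<^sub>m q r $$ (i, b)"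
    using A B ib by (simp add: comm_scalar_prod[of _ m])
qed (use A B in auto)

definition one_mat_rect :: "nat \<Rightarrow> nat \<Rightarrow> 'a :: semiring_1 mat" where
  "one_mat_rect a b = mat a b (\<lambda>(i, j). if i = j then 1 else 0)"

lemma one_mat_rect_carrier [simp]: "one_mat_rect a b \<in> carrier_mat a b"
  by (simp add: one_mat_rect_def)

lemma one_mat_rect_mult:
  assumes B: "B \<in> carrier_mat b c"
  shows "one_mat_rect a b * B = mat a c (\<lambda>(i, j). if i < b then B $$ (i, j) else 0)"
proof (rule eq_matI)
  fix i j assume "i < dim_row (mat a c (\<lambda>(i, j). if i < b then B $$ (i, j) else 0))"
    and "j < dim_col (mat a c (\<lambda>(i, j). if i < b then B $$ (i, j) else 0))"
  then have ij: "i < a" "j < c" by auto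
  have "(one_mat_rect a b * B) $$ (i, j) = (\<Sum>t<b. one_mat_rect a b $$ (i, t) * B $$ (t, j))"
    using B ij by (intro index_mult_mat_sum) auto
  also have "\<dots> = (\<Sum>t<b. if t = i then B $$ (t, j) else 0)"
    using ij by (intro sum.cong) (auto simp: one_mat_rect_def)
  finally show "(one_mat_rect a b * B) $$ (i, j) =
      mat a c (\<lambda>(i, j). if i < b then B $$ (i, j) else 0) $$ (i, j)"
    using ij by simp
qed (use B in \<open>auto simp: one_mat_rect_def\<close>)

lemma rs_pad_zero_rows:
  assumes A: "A \<in> carrier_mat r c" and rR: "r \<le> R"
  shows "rs (mat R c (\<lambda>(i, j). if i < r then A $$ (i, j) else 0)) = rs A"
    (is "rs ?A' = _")
proof
  have "?A' = one_mat_rect R r * A" using one_mat_rect_mult[OF A] by simp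
  then show "rs ?A' \<subseteq> rs A" using rs_mult_subset[OF one_mat_rect_carrier A] by simp
  have "A = one_mat_rect r R * ?A'"
    using A rR by (subst one_mat_rect_mult[of _ R c]) (auto intro!: eq_matI)
  moreover have "?A' \<in> carrier_mat R c" by simp
  ultimately show "rs A \<subseteq> rs ?A'"
    using rs_mult_subset[of "one_mat_rect r R" r R ?A' c] by simp
qed

definition embed_mat :: "nat \<Rightarrow> nat \<Rightarrow> nat \<Rightarrow> 'a :: semiring_1 mat" where
  "embed_mat r L off = mat r L (\<lambda>(i, c). if c = off + i then 1 else 0)"

lemma embed_mat_carrier [simp]: "embed_mat r L off \<in> carrier_mat r L"
  by (simp add: embed_mat_def)

lemma mult_embed_mat:
  assumes A: "A \<in> carrier_mat m r"
  shows "A * embed_mat r L off =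
    mat m L (\<lambda>(i, c). if off \<le> c \<and> c < off + r then A $$ (i, c - off) else 0)"
    (is "_ = ?B")
proof (rule eq_matI)
  fix i c assume "i < dim_row ?B" "c < dim_col ?B"
  then have ic: "i < m" "c < L" by auto
  have "(A * embed_mat r L off) $$ (i, c) = (\<Sum>t<r. A $$ (i, t) * embed_mat r L off $$ (t, c))"
    using A ic by (intro index_mult_mat_sum) auto
  also have "\<dots> = (\<Sum>t<r. if t = c - off \<and> off \<le> c then A $$ (i, t) else 0)"
    using ic by (intro sum.cong) (auto simp: embed_mat_def)
  finally show "(A * embed_mat r L off) $$ (i, c) = ?B $$ (i, c)"
    using ic by auto
qed (use A in \<open>auto simp: embed_mat_def\<close>)

lemma mult_transpose_embed_mat:
  assumes X: "X \<in> carrier_mat m L" and fits: "off + r \<le> L"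
  shows "X * (embed_mat r L off)\<^sup>T = mat m r (\<lambda>(i, j). X $$ (i, off + j))"
    (is "_ = ?B")
proof (rule eq_matI)
  fix i j assume "i < dim_row ?B" "j < dim_col ?B"
  then have ij: "i < m" "j < r" by auto
  have "(X * (embed_mat r L off)\<^sup>T) $$ (i, j) = (\<Sum>t<L. X $$ (i, t) * (embed_mat r L off)\<^sup>T $$ (t, j))"
    using X ij by (intro index_mult_mat_sum) auto
  also have "\<dots> = (\<Sum>t<L. if t = off + j then X $$ (i, t) else 0)"
    using ij by (intro sum.cong) (auto simp: embed_mat_def)
  finally show "(X * (embed_mat r L off)\<^sup>T) $$ (i, j) = ?B $$ (i, j)"
    using ij fits by simp
qed (use X in \<open>auto simp: embed_mat_def\<close>)

lemma dim_MB_mats [simp]: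
  "dim_row (HX_MB n nG rG D HX HG T) = dim_row HX + (D - 1) * rG"
  "dim_col (HX_MB n nG rG D HX HG T) = mb_len n nG rG D"
  "dim_row (HZ_MB n nG rG D HZ HG S) = dim_row HZ + (D - 1) * nG"
  "dim_col (HZ_MB n nG rG D HZ HG S) = mb_len n nG rG D"
  "dim_row (JX_MB n nG rG D JXp S) = dim_row JXp"
  "dim_col (JX_MB n nG rG D JXp S) = mb_len n nG rG D"
  by (simp_all add: HX_MB_def HZ_MB_def JX_MB_def Let_def)

lemma P_MB_eq_embed_mat: "P_MB n nG rG D = embed_mat n (mb_len n nG rG D) 0"
  by (simp add: P_MB_def embed_mat_def)

lemma P_ob_eq_embed_mat: "P_ob n nG rG D = embed_mat nG (mb_len n nG rG D) (n + (D - 2) * nG)"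
  by (simp add: P_ob_def embed_mat_def)

(* Column c lies in u_0, in u_{k+1}, or in w_{k+1}; the block index k is 0-based. *)
lemma mb_column_cases:
  assumes "c < mb_len n nG rG D"
  obtains "c < n"
    | k b where "k < D - 1" "b < nG" "c = n + (k * nG + b)"
    | k b where "k < D - 1" "b < rG" "c = n + (D - 1) * nG + (k * rG + b)"
proof -
  consider "c < n" | "n \<le> c" "c - n < (D - 1) * nG"
    | "n + (D - 1) * nG \<le> c" "c - (n + (D - 1) * nG) < (D - 1) * rG"
    using assms unfolding mb_len_def by linarith
  then show thesis
  proof cases
    case 2
    then have "(c - n) div nG < D - 1" by (simp add: less_mult_imp_div_less)
    moreover from 2 have "(c - n) mod nG < nG" by (cases nG) auto
    ultimately show thesis using that(2) 2 by auto
  next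
    case 3
    then have "(c - (n + (D - 1) * nG)) div rG < D - 1" by (simp add: less_mult_imp_div_less)
    moreover from 3 have "(c - (n + (D - 1) * nG)) mod rG < rG" by (cases rG) auto
    ultimately show thesis using that(3) 3 by (metis div_mult_mod_eq le_add_diff_inverse)
  qed (use that in auto)
qed

lemma HX_MB_u0_column:
  assumes "i < dim_row HX + (D - 1) * rG" "c < n"
  shows "HX_MB n nG rG D HX HG T $$ (i, c) = (if i < dim_row HX then HX $$ (i, c) else 0)"
  using assms unfolding HX_MB_def Let_def by (simp add: mb_len_def)

lemma JX_MB_u0_column:
  assumes "i < dim_row JXp" "c < n"
  shows "JX_MB n nG rG D JXp S $$ (i, c) = JXp $$ (i, c)"
  using assms unfolding JX_MB_def Let_def by (simp add: mb_len_def)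

lemma HZ_MB_memory_row:
  assumes "r < dim_row HZ" "c < mb_len n nG rG D"
  shows "HZ_MB n nG rG D HZ HG S $$ (r, c) = (if c < n then HZ $$ (r, c) else 0)"
  using assms unfolding HZ_MB_def Let_def by simp

lemma glue_row_index:
  fixes j a D nG :: nat
  assumes "j < D - 1" "a < nG"
  shows "j * nG + a < (D - 1) * nG" "(j * nG + a) div nG = j" "(j * nG + a) mod nG = a"
proof -
  have "(j + 1) * nG \<le> (D - 1) * nG" using assms(1) by (intro mult_le_mono1) simp
  then show "j * nG + a < (D - 1) * nG" using assms(2) by simp
qed (use assms(2) in auto)

lemma HZ_MB_glue_row_u0:
  assumes "j < D - 1" "a < nG" "c < n"
  shows "HZ_MB n nG rG D HZ HG S $$ (dim_row HZ + (j * nG + a), c) = (if j = 0 then S $$ (a, c) else 0)"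
  using assms glue_row_index[OF assms(1,2)] unfolding HZ_MB_def Let_def by (simp add: mb_len_def)

lemma HZ_MB_glue_row_u:
  assumes "j < D - 1" "a < nG" "k < D - 1" "b < nG"
  shows "HZ_MB n nG rG D HZ HG S $$ (dim_row HZ + (j * nG + a), n + (k * nG + b)) =
    (if (k = j \<or> k + 1 = j) \<and> b = a then 1 else 0)"
  using assms glue_row_index[OF assms(1,2)] glue_row_index[OF assms(3,4)]
  unfolding HZ_MB_def Let_def by (simp add: mb_len_def)

lemma HZ_MB_glue_row_w:
  assumes "j < D - 1" "a < nG" "k < D - 1" "b < rG"
  shows "HZ_MB n nG rG D HZ HG S $$ (dim_row HZ + (j * nG + a), n + (D - 1) * nG + (k * rG + b)) =
    (if k = j then HG $$ (b, a) else 0)"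
  using assms glue_row_index[OF assms(1,2)] glue_row_index[OF assms(3,4)]
  unfolding HZ_MB_def Let_def by (simp add: mb_len_def)

lemma rs_HX_MB_restrict_u0:
  assumes HX: "HX \<in> carrier_mat rX n"
  shows "rs (HX_MB n nG rG D HX HG T * (P_MB n nG rG D)\<^sup>T) = rs HX"
proof -
  have "HX_MB n nG rG D HX HG T * (P_MB n nG rG D)\<^sup>T =
      mat (rX + (D - 1) * rG) n (\<lambda>(i, j). if i < rX then HX $$ (i, j) else 0)"
    unfolding P_MB_eq_embed_mat using HX
    by (subst mult_transpose_embed_mat[of _ "rX + (D - 1) * rG"])
      (auto simp: mb_len_def HX_MB_u0_column intro!: eq_matI)
  then show ?thesis using rs_pad_zero_rows[OF HX] by simp
qed

lemma rs_HZ_mult_P_MB_subset: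
  assumes HZ: "HZ \<in> carrier_mat rZ n"
  shows "rs (HZ * P_MB n nG rG D) \<subseteq> rs (HZ_MB n nG rG D HZ HG S)"
proof -
  let ?H = "HZ_MB n nG rG D HZ HG S"
  have H: "?H \<in> carrier_mat (rZ + (D - 1) * nG) (mb_len n nG rG D)" using HZ by auto
  have "HZ * P_MB n nG rG D = one_mat_rect rZ (rZ + (D - 1) * nG) * ?H"
    unfolding P_MB_eq_embed_mat mult_embed_mat[OF HZ] one_mat_rect_mult[OF H]
    using HZ by (intro eq_matI) (auto simp: HZ_MB_memory_row)
  then show ?thesis using rs_mult_subset[OF one_mat_rect_carrier H] by simp
qed

lemma rs_JX_MB_restrict_u0:
  assumes JX: "JX \<in> carrier_mat k n" and M: "M \<in> carrier_mat k k" and N: "N \<in> carrier_mat k k"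
    and NM: "N * M = 1\<^sub>m k"
  shows "rs (JX_MB n nG rG D (M * JX) S * (P_MB n nG rG D)\<^sup>T) = rs JX"
proof -
  have "JX_MB n nG rG D (M * JX) S * (P_MB n nG rG D)\<^sup>T = M * JX"
    unfolding P_MB_eq_embed_mat using JX M
    by (subst mult_transpose_embed_mat[of _ k]) (auto simp: mb_len_def JX_MB_u0_column intro!: eq_matI)
  then show ?thesis using rs_mult_left_invertible[OF M N NM JX] by simp
qed

lemma rs_JZ_MB_eq:
  assumes JZ: "JZ \<in> carrier_mat k n" and M: "M \<in> carrier_mat k k" and N: "N \<in> carrier_mat k k"
    and NM: "N * M = 1\<^sub>m k"
  shows "rs (JZ_MB n nG rG D (M * JZ)) = rs (JZ * P_MB n nG rG D)"
proof -
  have P: "P_MB n nG rG D \<in> carrier_mat n (mb_len n nG rG D)"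
    unfolding P_MB_eq_embed_mat by (rule embed_mat_carrier)
  have "JZ_MB n nG rG D (M * JZ) = M * JZ * P_MB n nG rG D"
    unfolding P_MB_eq_embed_mat using M JZ by (auto simp: mult_embed_mat[of _ k n] JZ_MB_def intro!: eq_matI)
  also have "\<dots> = M * (JZ * P_MB n nG rG D)" using M JZ P by (rule assoc_mult_mat)
  finally have "JZ_MB n nG rG D (M * JZ) = M * (JZ * P_MB n nG rG D)" .
  moreover have "JZ * P_MB n nG rG D \<in> carrier_mat k (mb_len n nG rG D)" using JZ P by simp
  ultimately show ?thesis using rs_mult_left_invertible[OF M N NM] by simp
qed

(* Row i takes row i of J_G in each of the D - 1 glue row blocks of H_Z^{M-B}. *)
definition glue_layers_coeffs :: "nat \<Rightarrow> nat \<Rightarrow> nat \<Rightarrow> bit mat \<Rightarrow> bit mat" where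
  "glue_layers_coeffs rZ nG D JG = mat (dim_row JG) (rZ + (D - 1) * nG)
     (\<lambda>(i, r). if r < rZ then 0 else JG $$ (i, (r - rZ) mod nG))"

lemma glue_layers_coeffs_mult_entry:
  assumes H: "H \<in> carrier_mat (rZ + (D - 1) * nG) L" and i: "i < dim_row JG" and c: "c < L"
  shows "(glue_layers_coeffs rZ nG D JG * H) $$ (i, c) =
    (\<Sum>j<D - 1. \<Sum>a<nG. JG $$ (i, a) * H $$ (rZ + (j * nG + a), c))"
proof -
  let ?C = "glue_layers_coeffs rZ nG D JG"
  have "(?C * H) $$ (i, c) = (\<Sum>r<rZ + (D - 1) * nG. ?C $$ (i, r) * H $$ (r, c))"
    using H i c by (intro index_mult_mat_sum) (auto simp: glue_layers_coeffs_def)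
  also have "\<dots> = (\<Sum>t<(D - 1) * nG. JG $$ (i, t mod nG) * H $$ (rZ + t, c))"
    using i by (simp add: sum_lessThan_add glue_layers_coeffs_def)
  also have "\<dots> = (\<Sum>j<D - 1. \<Sum>a<nG. JG $$ (i, a) * H $$ (rZ + (j * nG + a), c))"
    unfolding sum_lessThan_mult by (intro sum.cong refl) simp
  finally show ?thesis .
qed

lemma glue_layers_HZ_MB_u0_entry:
  assumes HZ: "HZ \<in> carrier_mat rZ n" and JG: "JG \<in> carrier_mat q nG" and S: "S \<in> carrier_mat nG n"
    and D: "D \<ge> 2" and i: "i < q" and c: "c < n"
  shows "(glue_layers_coeffs rZ nG D JG * HZ_MB n nG rG D HZ HG S) $$ (i, c) = (JG * S) $$ (i, c)"
proof -
  have rZ: "dim_row HZ = rZ" using HZ by simp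
  have "(glue_layers_coeffs rZ nG D JG * HZ_MB n nG rG D HZ HG S) $$ (i, c) =
      (\<Sum>j<D - 1. \<Sum>a<nG. JG $$ (i, a) * HZ_MB n nG rG D HZ HG S $$ (dim_row HZ + (j * nG + a), c))"
    unfolding rZ using HZ JG i c
    by (intro glue_layers_coeffs_mult_entry[where L = "mb_len n nG rG D"]) (auto simp: mb_len_def)
  also have "\<dots> = (\<Sum>j<D - 1. \<Sum>a<nG. JG $$ (i, a) * (if j = 0 then S $$ (a, c) else 0))"
    using c by (intro sum.cong refl) (simp add: HZ_MB_glue_row_u0)
  also have "\<dots> = (\<Sum>j<D - 1. if j = 0 then (\<Sum>a<nG. JG $$ (i, a) * S $$ (a, c)) else 0)"
    by (intro sum.cong) (auto simp: sum_distrib_left)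
  also have "\<dots> = (JG * S) $$ (i, c)"
    using D index_mult_mat_sum[OF JG S i c] by simp
  finally show ?thesis .
qed

lemma glue_layers_HZ_MB_u_entry:
  assumes HZ: "HZ \<in> carrier_mat rZ n" and JG: "JG \<in> carrier_mat q nG"
    and i: "i < q" and k: "k < D - 1" and b: "b < nG"
  shows "(glue_layers_coeffs rZ nG D JG * HZ_MB n nG rG D HZ HG S) $$ (i, n + (k * nG + b)) =
    (if k + 1 < D - 1 then 0 else JG $$ (i, b))"
proof -
  have rZ: "dim_row HZ = rZ" using HZ by simp
  have "(glue_layers_coeffs rZ nG D JG * HZ_MB n nG rG D HZ HG S) $$ (i, n + (k * nG + b)) =
      (\<Sum>j<D - 1. \<Sum>a<nG. JG $$ (i, a) *
        HZ_MB n nG rG D HZ HG S $$ (dim_row HZ + (j * nG + a), n + (k * nG + b)))"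
    unfolding rZ using HZ JG i glue_row_index[OF k b]
    by (intro glue_layers_coeffs_mult_entry) (auto simp: mb_len_def)
  also have "\<dots> = (\<Sum>j<D - 1. \<Sum>a<nG. JG $$ (i, a) * (if (k = j \<or> k + 1 = j) \<and> b = a then 1 else 0))"
    using k b by (intro sum.cong refl) (simp add: HZ_MB_glue_row_u)
  also have "\<dots> = (\<Sum>j<D - 1. if k = j \<or> k + 1 = j then JG $$ (i, b) else 0)"
    using b by (intro sum.cong refl) (simp add: if_distrib[of "(*) _"] cong: if_cong)
  also have "\<dots> = (if k + 1 < D - 1 then 0 else JG $$ (i, b))"
    using k by (rule sum_adjacent_layers)
  finally show ?thesis .
qed

lemma glue_layers_HZ_MB_w_entry:
  assumes HZ: "HZ \<in> carrier_mat rZ n" and JG: "JG \<in> carrier_mat q nG" and HG: "HG \<in> carrier_mat rG nG"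
    and JG_HG: "JG * HG\<^sup>T = 0\<^sub>m q rG" and i: "i < q" and k: "k < D - 1" and b: "b < rG"
  shows "(glue_layers_coeffs rZ nG D JG * HZ_MB n nG rG D HZ HG S) $$
    (i, n + (D - 1) * nG + (k * rG + b)) = 0"
proof -
  have rZ: "dim_row HZ = rZ" using HZ by simp
  have "(glue_layers_coeffs rZ nG D JG * HZ_MB n nG rG D HZ HG S) $$ (i, n + (D - 1) * nG + (k * rG + b)) =
      (\<Sum>j<D - 1. \<Sum>a<nG. JG $$ (i, a) *
        HZ_MB n nG rG D HZ HG S $$ (dim_row HZ + (j * nG + a), n + (D - 1) * nG + (k * rG + b)))"
    unfolding rZ using HZ JG i glue_row_index[OF k b]
    by (intro glue_layers_coeffs_mult_entry) (auto simp: mb_len_def)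
  also have "\<dots> = (\<Sum>j<D - 1. \<Sum>a<nG. JG $$ (i, a) * (if k = j then HG $$ (b, a) else 0))"
    using k b by (intro sum.cong refl) (simp only: lessThan_iff HZ_MB_glue_row_w)
  also have "\<dots> = (\<Sum>j<D - 1. if j = k then (JG * HG\<^sup>T) $$ (i, b) else 0)"
    using index_mult_mat_sum[OF JG _ i, of "HG\<^sup>T" rG b] HG b
    by (intro sum.cong) (auto simp: sum_distrib_left)
  also have "\<dots> = 0" using JG_HG i b by simp
  finally show ?thesis .
qed

lemma glue_layers_coeffs_mult_HZ_MB:
  assumes HZ: "HZ \<in> carrier_mat rZ n" and HG: "HG \<in> carrier_mat rG nG"
    and S: "S \<in> carrier_mat nG n" and JG: "JG \<in> carrier_mat q nG"
    and JG_HG: "JG * HG\<^sup>T = 0\<^sub>m q rG" and D: "D \<ge> 2"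
  shows "glue_layers_coeffs rZ nG D JG * HZ_MB n nG rG D HZ HG S =
    JG * S * P_MB n nG rG D + JG * P_ob n nG rG D"
    (is "?C * ?H = ?A * ?P + JG * ?Pob")
proof (rule eq_matI)
  obtain m where Dm: "D = m + 2" using D by (metis le_add_diff_inverse2)
  let ?ob = "n + (D - 2) * nG"
  fix i c assume "i < dim_row (?A * ?P + JG * ?Pob)" "c < dim_col (?A * ?P + JG * ?Pob)"
  then have i: "i < q" and c: "c < mb_len n nG rG D" using JG by (auto simp: P_ob_def)
  have rhs: "(?A * ?P + JG * ?Pob) $$ (i, c) =
      (if c < n then ?A $$ (i, c) else 0) + (if ?ob \<le> c \<and> c < ?ob + nG then JG $$ (i, c - ?ob) else 0)"
    using JG S i c unfolding P_MB_eq_embed_mat P_ob_eq_embed_mat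
    by (simp add: mult_embed_mat[of ?A q n] mult_embed_mat[OF JG] del: index_mult_mat)
  from c show "(?C * ?H) $$ (i, c) = (?A * ?P + JG * ?Pob) $$ (i, c)"
  proof (cases rule: mb_column_cases)
    case 1
    then show ?thesis unfolding rhs using glue_layers_HZ_MB_u0_entry[OF HZ JG S D i] by simp
  next
    case (2 k b)
    show ?thesis
    proof (cases "k + 1 < D - 1")
      case True
      then have "(k + 1) * nG \<le> (D - 2) * nG" by (intro mult_le_mono1) simp
      then have "c < ?ob" using 2 by simp
      then show ?thesis unfolding rhs using glue_layers_HZ_MB_u_entry[OF HZ JG i 2(1,2)] 2 True by simp
    next
      case False
      then have "c = ?ob + b" using 2 by (simp add: Dm)
      then show ?thesis unfolding rhs using glue_layers_HZ_MB_u_entry[OF HZ JG i 2(1,2)] 2 False by simp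
    qed
  next
    case (3 k b)
    then have "?ob + nG \<le> c" by (simp add: Dm)
    then show ?thesis unfolding rhs using glue_layers_HZ_MB_w_entry[OF HZ JG HG JG_HG i 3(1,2)] 3 by simp
  qed
qed (use HZ JG S in \<open>auto simp: glue_layers_coeffs_def P_ob_def\<close>)

lemma rs_glue_logical_subset_HZ_MB:
  assumes HZ: "HZ \<in> carrier_mat rZ n" and HG: "HG \<in> carrier_mat rG nG"
    and S: "S \<in> carrier_mat nG n" and JG: "JG \<in> carrier_mat q nG" and ker: "rs JG \<subseteq> ker HG"
    and D: "D \<ge> 2"
  shows "rs (JG * S * P_MB n nG rG D + JG * P_ob n nG rG D) \<subseteq> rs (HZ_MB n nG rG D HZ HG S)"
proof -
  have "JG * S * P_MB n nG rG D + JG * P_ob n nG rG D =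
      glue_layers_coeffs rZ nG D JG * HZ_MB n nG rG D HZ HG S"
    using glue_layers_coeffs_mult_HZ_MB[OF HZ HG S JG _ D]
      mult_transpose_zero_if_rs_subset_ker[OF JG HG ker] by simp
  moreover have "glue_layers_coeffs rZ nG D JG \<in> carrier_mat q (rZ + (D - 1) * nG)"
    using JG by (simp add: glue_layers_coeffs_def)
  moreover have "HZ_MB n nG rG D HZ HG S \<in> carrier_mat (rZ + (D - 1) * nG) (mb_len n nG rG D)"
    using HZ by auto
  ultimately show ?thesis by (simp add: rs_mult_subset)
qed

theorem lemma6:
  fixes n rX rZ k kg q nG rG dR :: nat
    and HX HZ JX JZ FX FZ HG S T JG Jbar Jbar_inv :: "bit mat"
  assumes code: "css_subsystem_code n rX rZ k kg HX HZ JX JZ FX FZ"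
    and dR: "dR \<ge> 2"
    and Jbar: "Jbar \<in> carrier_mat k k" "Jbar_inv \<in> carrier_mat k k"
      "Jbar * Jbar_inv = 1\<^sub>m k" "Jbar_inv * Jbar = 1\<^sub>m k"
    and q: "q \<le> k"
    and HG: "HG \<in> carrier_mat rG nG"
    and S: "S \<in> carrier_mat nG n" and T: "T \<in> carrier_mat rX rG"
    and compat: "HX * S\<^sup>T = T * HG"
    and JG: "JG \<in> carrier_mat q nG" "rs JG \<subseteq> ker HG"
    and JZA_eq: "mat q n (\<lambda>(i, j). (Jbar * JZ) $$ (i, j)) = JG * S"
  shows
    "let JZp = Jbar * JZ;
         JXp = Jbar_inv\<^sup>T * JX;
         JZA = mat q n (\<lambda>(i, j). JZp $$ (i, j));
         P = P_MB n nG rG dR;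
         Pob = P_ob n nG rG dR;
         HXmb = HX_MB n nG rG dR HX HG T;
         HZmb = HZ_MB n nG rG dR HZ HG S;
         JXmb = JX_MB n nG rG dR JXp S;
         JZmb = JZ_MB n nG rG dR JZp
     in rs HX = rs (HXmb * P\<^sup>T) \<and>
        rs (HZ * P) \<subseteq> rs HZmb \<and>
        rs JX = rs (JXmb * P\<^sup>T) \<and>
        rs (JZ * P) = rs JZmb \<and>
        rs (JZA * P + JG * Pob) \<subseteq> rs HZmb"
proof -
  have HX: "HX \<in> carrier_mat rX n" and HZ: "HZ \<in> carrier_mat rZ n"
    and JX: "JX \<in> carrier_mat k n" and JZ: "JZ \<in> carrier_mat k n"
    using code unfolding css_subsystem_code_def by auto
  have Jbar_inv_T: "Jbar\<^sup>T * Jbar_inv\<^sup>T = 1\<^sub>m k"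
    using Jbar by (metis transpose_mult transpose_one)
  show ?thesis
    unfolding Let_def JZA_eq
    using rs_HX_MB_restrict_u0[OF HX] rs_HZ_mult_P_MB_subset[OF HZ]
      rs_JX_MB_restrict_u0[OF JX _ _ Jbar_inv_T] rs_JZ_MB_eq[OF JZ Jbar(1,2,4)]
      rs_glue_logical_subset_HZ_MB[OF HZ HG S JG dR] Jbar(1,2)
    by simp
qed

end
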